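(* Let $\mathbf{A}\in\mathbb{R}^{n\times n}$ be symmetric positive semidefinite with $\mathbf{1}^{\intercal}\mathbf{A}=\mathbf{0}^{\intercal}$ and let $\mathbf{x}\in\{-1,1\}^n$. Let $M_0=\frac14\mathbf{x}^{\intercal}\mathbf{A}\mathbf{x}$, let $S_0=\{i:\mathbf{x}_i=1\}$ and $\bar S_0$ its complement, and assume $|S_0|\le n/2$. Let $s,t\in(0,\frac12]$ be such that $|S_0|=sn$ and $tn$ is an integer. Then there exists a set of nodes $T$ with $|T|=tn$ such that the cut $(T,\bar T)$ has value at least $\frac{(1-t)^2-7(1-t)/n+12/n^2}{(1-s)^2+(1-s)/n}M_0$ if $t>s$, and value at least $\frac{t^2-t/n}{s^2-s/n}M_0$ if $t<s$. Furthermore, $T$ can be obtained from $S_0$ by repeatedly moving a single node between the two sides of the cut, where each move (from a side $P$) decreases the current cut value by at most $\frac{2}{|P|}$ times the current cut value.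
   Context: For a set $T\subseteq\{1,\dots,n\}$, the value of the cut $(T,\bar T)$ is $\frac14\mathbf{y}^{\intercal}\mathbf{A}\mathbf{y}$ where $\mathbf{y}_i=1$ for $i\in T$ and $\mathbf{y}_i=-1$ otherwise. $\mathbf{1}$ is the all-ones vector. *)

theory Defs
  imports "HOL-Analysis.Analysis"
begin

definition sign_vec :: "'n::finite set \<Rightarrow> real^'n" where
  "sign_vec T = (\<chi> i. if i \<in> T then 1 else -1)"

definition cut_value :: "real^'n^'n \<Rightarrow> 'n::finite set \<Rightarrow> real" where
  "cut_value A T = (1/4) * (sign_vec T \<bullet> (A *v sign_vec T))"

definition single_move :: "real^'n^'n \<Rightarrow> 'n::finite set \<Rightarrow> 'n set \<Rightarrow> bool" where
  "single_move A T T' \<longleftrightarrow>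
     (\<exists>v. (v \<in> T \<and> T' = T - {v} \<and>
              cut_value A T - cut_value A T' \<le> (2 / real (card T)) * cut_value A T)
         \<or> (v \<notin> T \<and> T' = insert v T \<and>
              cut_value A T - cut_value A T' \<le> (2 / real (card (- T))) * cut_value A T))"

definition move_path :: "real^'n^'n \<Rightarrow> 'n::finite set \<Rightarrow> 'n set \<Rightarrow> bool" where
  "move_path A S T \<longleftrightarrow>
     (\<exists>Ts. Ts \<noteq> [] \<and> hd Ts = S \<and> last Ts = T \<and>
           (\<forall>k. Suc k < length Ts \<longrightarrow> single_move A (Ts ! k) (Ts ! Suc k)))"

end

(* Since A has zero row and column sums, the cut value of T is the total weight of the block
   T x T of A, and it does not change when T is replaced by its complement.  Removing a node v
   from a side P lowers this block sum by 2 (A 1_P)_v - A_vv; summed over v in P this is twice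
   the cut value minus the (nonnegative) diagonal of A on P, so some node of P costs at most
   2/|P| of the current value.  A side of size p therefore keeps a factor (p - 2)/p per move,
   and shrinking it from p to q nodes keeps the telescoped factor q (q - 1) / (p (p - 1)).
   For t < s we shrink S0 itself, for t > s its complement. *)

theory Submission
  imports Defs
begin

lemma sign_vec_Compl: "sign_vec (- T) = - sign_vec T"
  by (simp add: sign_vec_def vec_eq_iff)

lemma cut_value_Compl: "cut_value A (- T) = cut_value A T"
  using matrix_vector_mult_scaleR[of A "-1" "sign_vec T"]
  by (simp add: cut_value_def sign_vec_Compl)

lemma cut_value_nonneg:
  assumes "\<forall>z::real^'n::finite. 0 \<le> z \<bullet> (A *v z)"
  shows "0 \<le> cut_value A T"
  using assms by (simp add: cut_value_def)

lemma psd_diag_nonneg: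
  fixes A :: "real^'n::finite^'n"
  assumes "\<forall>z::real^'n. 0 \<le> z \<bullet> (A *v z)"
  shows "0 \<le> A $ v $ v"
  using assms[rule_format, of "axis v 1"]
  by (simp add: matrix_vector_mult_basis inner_axis' column_def)

lemma symmetric_matrix_entry: "transpose A = A \<Longrightarrow> A $ i $ j = A $ j $ i"
  by (metis transpose_def vec_lambda_beta)

definition block_sum :: "real^'n^'n \<Rightarrow> 'n::finite set \<Rightarrow> real" where
  "block_sum A T = (\<Sum>i\<in>T. \<Sum>j\<in>T. A $ i $ j)"

text \<open>With y = 2 a - 1 for the indicator a of T, the terms of y A y involving the all-ones
  vector vanish because A has zero row and column sums.\<close>
lemma cut_value_eq_block_sum:
  fixes A :: "real^'n::finite^'n"
  assumes symm: "transpose A = A"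
    and ones: "\<forall>j. (\<Sum>i\<in>UNIV. A $ i $ j) = 0"
  shows "cut_value A T = block_sum A T"
proof -
  have rows: "(\<Sum>j\<in>UNIV. A $ i $ j) = 0" for i
    using ones[rule_format, of i] by (simp add: symmetric_matrix_entry[OF symm, of _ i])
  define a where "a i = (if i \<in> T then 1 else 0 :: real)" for i
  have y: "sign_vec T $ i = 2 * a i - 1" for i
    by (simp add: sign_vec_def a_def)
  have "sign_vec T \<bullet> (A *v sign_vec T)
      = (\<Sum>i\<in>UNIV. \<Sum>j\<in>UNIV. (2 * a i - 1) * A$i$j * (2 * a j - 1))"
    by (simp add: inner_vec_def matrix_vector_mult_def sum_distrib_left y mult.assoc)
  also have "\<dots> = (\<Sum>i\<in>UNIV. \<Sum>j\<in>UNIV.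
      4 * (a i * a j * A$i$j) - 2 * (a i * A$i$j) - 2 * (a j * A$i$j) + A$i$j)"
    by (simp add: algebra_simps)
  also have "\<dots> = 4 * (\<Sum>i\<in>UNIV. \<Sum>j\<in>UNIV. a i * a j * A$i$j)
      - 2 * (\<Sum>i\<in>UNIV. \<Sum>j\<in>UNIV. a i * A$i$j) - 2 * (\<Sum>i\<in>UNIV. \<Sum>j\<in>UNIV. a j * A$i$j)
      + (\<Sum>i\<in>UNIV. \<Sum>j\<in>UNIV. A$i$j)"
    by (simp add: sum.distrib sum_subtractf sum_distrib_left)
  also have "(\<Sum>i\<in>UNIV. \<Sum>j\<in>UNIV. a i * A$i$j) = 0"
    by (simp add: sum_distrib_left[symmetric] rows)
  also have "(\<Sum>i\<in>UNIV. \<Sum>j\<in>UNIV. a j * A$i$j) = 0"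
    by (subst sum.swap) (simp add: sum_distrib_left[symmetric] ones)
  also have "(\<Sum>i\<in>UNIV. \<Sum>j\<in>UNIV. A$i$j) = 0"
    by (simp add: rows)
  also have "(\<Sum>i\<in>UNIV. \<Sum>j\<in>UNIV. a i * a j * A$i$j)
      = (\<Sum>i\<in>UNIV. if i \<in> T then (\<Sum>j\<in>UNIV. if j \<in> T then A$i$j else 0) else 0)"
    by (intro sum.cong) (auto simp: a_def intro!: sum.cong)
  also have "\<dots> = block_sum A T"
    by (simp add: block_sum_def sum.inter_restrict[symmetric])
  finally show ?thesis
    by (simp add: cut_value_def)
qed

lemma block_sum_insert:
  assumes "v \<notin> U"
  shows "block_sum A (insert v U) = A$v$v + (\<Sum>j\<in>U. A$v$j) + (\<Sum>i\<in>U. A$i$v) + block_sum A U"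
  using assms by (simp add: block_sum_def sum.distrib)

lemma block_sum_remove:
  fixes A :: "real^'n::finite^'n"
  assumes symm: "transpose A = A" and "v \<in> T"
  shows "block_sum A T = block_sum A (T - {v}) + 2 * (\<Sum>j\<in>T. A$v$j) - A$v$v"
proof -
  obtain U where T: "T = insert v U" and "v \<notin> U"
    using mk_disjoint_insert[OF \<open>v \<in> T\<close>] by blast
  then have "T - {v} = U"
    by simp
  moreover have "(\<Sum>i\<in>U. A$i$v) = (\<Sum>j\<in>U. A$v$j)"
    by (simp add: symmetric_matrix_entry[OF symm, of _ v])
  ultimately show ?thesis
    using \<open>v \<notin> U\<close> by (simp add: T block_sum_insert)
qed

lemma sum_block_sum_remove:
  fixes A :: "real^'n::finite^'n"
  assumes "transpose A = A"
  shows "(\<Sum>v\<in>T. block_sum A T - block_sum A (T - {v})) = 2 * block_sum A T - (\<Sum>v\<in>T. A$v$v)"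
  using block_sum_remove[OF assms]
  by (simp add: block_sum_def sum_subtractf sum_distrib_left)

lemma exists_cheap_removal:
  fixes A :: "real^'n::finite^'n"
  assumes symm: "transpose A = A"
    and psd: "\<forall>z::real^'n. 0 \<le> z \<bullet> (A *v z)"
    and ones: "\<forall>j. (\<Sum>i\<in>UNIV. A $ i $ j) = 0"
    and "T \<noteq> {}"
  shows "\<exists>v\<in>T. cut_value A T - cut_value A (T - {v}) \<le> 2 / real (card T) * cut_value A T"
proof (rule ccontr)
  assume "\<not> ?thesis"
  then have "(\<Sum>v\<in>T. 2 / real (card T) * block_sum A T) < (\<Sum>v\<in>T. block_sum A T - block_sum A (T - {v}))"
    using \<open>T \<noteq> {}\<close> by (intro sum_strict_mono) (auto simp: cut_value_eq_block_sum[OF symm ones] not_le)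
  also have "\<dots> \<le> 2 * block_sum A T"
    using psd_diag_nonneg[OF psd] by (simp add: sum_block_sum_remove[OF symm] sum_nonneg)
  finally show False
    using \<open>T \<noteq> {}\<close> by simp
qed

lemma exists_single_move_shrinking:
  fixes A :: "real^'n::finite^'n"
  assumes symm: "transpose A = A"
    and psd: "\<forall>z::real^'n. 0 \<le> z \<bullet> (A *v z)"
    and ones: "\<forall>j. (\<Sum>i\<in>UNIV. A $ i $ j) = 0"
    and "T \<noteq> {}"
  shows "\<exists>T'. single_move A T T' \<and> card T' = card T - 1 \<and>
           cut_value A T - cut_value A T' \<le> 2 / real (card T) * cut_value A T"
proof -
  obtain v where v: "v \<in> T" "cut_value A T - cut_value A (T - {v}) \<le> 2 / real (card T) * cut_value A T"
    using exists_cheap_removal[OF assms] by blast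
  then have "single_move A T (T - {v})"
    unfolding single_move_def by blast
  moreover have "card (T - {v}) = card T - 1"
    using v(1) by simp
  ultimately show ?thesis
    using v(2) by blast
qed

lemma exists_single_move_growing:
  fixes A :: "real^'n::finite^'n"
  assumes symm: "transpose A = A"
    and psd: "\<forall>z::real^'n. 0 \<le> z \<bullet> (A *v z)"
    and ones: "\<forall>j. (\<Sum>i\<in>UNIV. A $ i $ j) = 0"
    and "- T \<noteq> {}"
  shows "\<exists>T'. single_move A T T' \<and> card (- T') = card (- T) - 1 \<and>
           cut_value A T - cut_value A T' \<le> 2 / real (card (- T)) * cut_value A T"
proof -
  obtain v where "v \<in> - T"
    and v: "cut_value A (- T) - cut_value A (- T - {v}) \<le> 2 / real (card (- T)) * cut_value A (- T)"
    using exists_cheap_removal[OF assms] by blast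
  have cheap: "cut_value A T - cut_value A (insert v T) \<le> 2 / real (card (- T)) * cut_value A T"
    using v unfolding Compl_insert[symmetric] cut_value_Compl .
  have "single_move A T (insert v T)"
    unfolding single_move_def using \<open>v \<in> - T\<close> cheap by blast
  moreover have "card (- insert v T) = card (- T) - 1"
    unfolding Compl_insert using \<open>v \<in> - T\<close> by simp
  ultimately show ?thesis
    using cheap by blast
qed

lemma move_path_refl: "move_path A T T"
  unfolding move_path_def by (intro exI[of _ "[T]"]) simp

lemma move_path_snoc:
  assumes "move_path A S T" and "single_move A T T'"
  shows "move_path A S T'"
proof -
  obtain Ts where Ts: "Ts \<noteq> []" "hd Ts = S" "last Ts = T"
    "\<forall>k. Suc k < length Ts \<longrightarrow> single_move A (Ts ! k) (Ts ! Suc k)"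
    using assms(1) unfolding move_path_def by blast
  have "\<forall>k. Suc k < length (Ts @ [T']) \<longrightarrow> single_move A ((Ts @ [T']) ! k) ((Ts @ [T']) ! Suc k)"
  proof (intro allI impI)
    fix k
    assume k: "Suc k < length (Ts @ [T'])"
    show "single_move A ((Ts @ [T']) ! k) ((Ts @ [T']) ! Suc k)"
    proof (cases "Suc k < length Ts")
      case True
      then show ?thesis
        using Ts(4) by (simp add: nth_append)
    next
      case False
      with k have "k = length Ts - 1"
        by simp
      then show ?thesis
        using Ts(1,3) assms(2) by (simp add: nth_append last_conv_nth)
    qed
  qed
  moreover have "Ts @ [T'] \<noteq> []" "hd (Ts @ [T']) = S" "last (Ts @ [T']) = T'"
    using Ts(1,2) by simp_all
  ultimately show ?thesis
    unfolding move_path_def by blast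
qed

definition ordered_pairs :: "nat \<Rightarrow> real" where
  "ordered_pairs k = real k * (real k - 1)"

lemma ordered_pairs_nonneg: "0 \<le> ordered_pairs k"
  by (cases k) (simp_all add: ordered_pairs_def)

lemma cheap_move_ratio:
  fixes p f f' :: real
  assumes "1 \<le> p" and "f - f' \<le> 2 / p * f"
  shows "f * ((p - 1) * (p - 2)) \<le> f' * (p * (p - 1))"
proof -
  have "p * (f - f') \<le> 2 * f"
    using mult_left_mono[OF assms(2), of p] assms(1) by simp
  then have "(p - 2) * f * (p - 1) \<le> p * f' * (p - 1)"
    using assms(1) by (intro mult_right_mono) (auto simp: algebra_simps)
  then show ?thesis
    by (simp add: algebra_simps)
qed

lemma exists_move_path_shrinking_side_ordered_pairs:
  fixes A :: "real^'n::finite^'n" and side :: "'n set \<Rightarrow> 'n set"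
  assumes step: "\<And>T. side T \<noteq> {} \<Longrightarrow> \<exists>T'. single_move A T T' \<and> card (side T') = card (side T) - 1 \<and>
                  cut_value A T - cut_value A T' \<le> 2 / real (card (side T)) * cut_value A T"
    and "1 \<le> m" "card (side S) = m + d"
  shows "\<exists>T. card (side T) = m \<and> move_path A S T \<and>
           cut_value A S * ordered_pairs m \<le> cut_value A T * ordered_pairs (card (side S))"
  using assms(2,3)
proof (induction d arbitrary: m)
  case 0
  then show ?case
    using move_path_refl[of A S] by auto
next
  case (Suc d)
  then obtain T where T: "card (side T) = Suc m" "move_path A S T"
      "cut_value A S * ordered_pairs (Suc m) \<le> cut_value A T * ordered_pairs (card (side S))"
    using Suc.IH[of "Suc m"] by auto
  then have "side T \<noteq> {}"
    by auto
  with step T(1) obtain T' where T': "single_move A T T'" "card (side T') = m"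
      "cut_value A T - cut_value A T' \<le> 2 / real (Suc m) * cut_value A T"
    by fastforce
  let ?P = "ordered_pairs (card (side S))"
  have "cut_value A S * ordered_pairs m * ordered_pairs (Suc m)
      = cut_value A S * ordered_pairs (Suc m) * ordered_pairs m"
    by (simp add: mult_ac)
  also have "\<dots> \<le> cut_value A T * ?P * ordered_pairs m"
    by (intro mult_right_mono T(3) ordered_pairs_nonneg)
  also have "\<dots> = cut_value A T * ordered_pairs m * ?P"
    by (simp add: mult_ac)
  also have "\<dots> \<le> cut_value A T' * ordered_pairs (Suc m) * ?P"
    using cheap_move_ratio[OF _ T'(3)]
    by (intro mult_right_mono ordered_pairs_nonneg) (simp add: ordered_pairs_def)
  also have "\<dots> = cut_value A T' * ?P * ordered_pairs (Suc m)"
    by (simp add: mult_ac)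
  finally have "cut_value A S * ordered_pairs m \<le> cut_value A T' * ?P"
    by (rule mult_right_le_imp_le) (use Suc.prems(1) in \<open>simp add: ordered_pairs_def\<close>)
  with T(2) T' show ?case
    using move_path_snoc by blast
qed

lemma exists_move_path_shrinking_side:
  fixes A :: "real^'n::finite^'n" and side :: "'n set \<Rightarrow> 'n set"
  assumes step: "\<And>T. side T \<noteq> {} \<Longrightarrow> \<exists>T'. single_move A T T' \<and> card (side T') = card (side T) - 1 \<and>
                  cut_value A T - cut_value A T' \<le> 2 / real (card (side T)) * cut_value A T"
    and nonneg: "\<And>T. 0 \<le> cut_value A T"
    and "1 \<le> m" "m \<le> card (side S)"
  shows "\<exists>T. card (side T) = m \<and> move_path A S T \<and>
           ordered_pairs m / ordered_pairs (card (side S)) * cut_value A S \<le> cut_value A T"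
proof -
  let ?P = "ordered_pairs (card (side S))"
  have "card (side S) = m + (card (side S) - m)"
    using \<open>m \<le> card (side S)\<close> by simp
  with exists_move_path_shrinking_side_ordered_pairs[OF step \<open>1 \<le> m\<close>]
  obtain T where T: "card (side T) = m" "move_path A S T"
      "cut_value A S * ordered_pairs m \<le> cut_value A T * ?P"
    by blast
  have "ordered_pairs m / ?P * cut_value A S \<le> cut_value A T"
  proof (cases "?P = 0")
    case True
    then show ?thesis
      using nonneg by simp
  next
    case False
    then have "0 < ?P"
      using ordered_pairs_nonneg by (simp add: less_le)
    then show ?thesis
      using T(3) by (simp add: pos_divide_le_eq mult.commute)
  qed
  with T(1,2) show ?thesis
    by blast
qed

lemma card_Compl_eq: "card (- U) = CARD('n) - card (U :: 'n::finite set)"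
  by (simp add: Compl_eq_Diff_UNIV card_Diff_subset)

lemma shrink_coefficient_eq:
  fixes t s :: real and m k n :: nat
  assumes "real m = t * real n" "real k = s * real n" "0 < n"
  shows "(t^2 - t / real n) / (s^2 - s / real n) = ordered_pairs m / ordered_pairs k"
proof -
  have "t^2 - t / real n = ordered_pairs m / (real n)^2"
    "s^2 - s / real n = ordered_pairs k / (real n)^2"
    using assms by (simp_all add: ordered_pairs_def field_simps power2_eq_square)
  then show ?thesis
    using assms(3) by simp
qed

text \<open>Scaled by n^2, the left-hand side is (a - 3) (a - 4) / (b (b + 1)) with a = n - m and
  b = n - k, which is below a (a - 1) / (b (b - 1)) as soon as a \<ge> 2.\<close>
lemma grow_coefficient_le:
  fixes t s :: real and m k n :: nat
  assumes "real m = t * real n" "real k = s * real n" "0 < k" "k < m" "2 * m \<le> n"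
  shows "((1 - t)^2 - 7 * (1 - t) / real n + 12 / (real n)^2) / ((1 - s)^2 + (1 - s) / real n)
           \<le> ordered_pairs (n - m) / ordered_pairs (n - k)"
proof -
  define a where "a = real (n - m)"
  define b where "b = real (n - k)"
  have "0 < n" "2 \<le> a" "a + 1 \<le> b"
    using assms(3-5) by (auto simp: a_def b_def)
  have "(1 - t)^2 - 7 * (1 - t) / real n + 12 / (real n)^2 = (a^2 - 7 * a + 12) / (real n)^2"
    "(1 - s)^2 + (1 - s) / real n = b * (b + 1) / (real n)^2"
    using assms \<open>0 < n\<close> by (simp_all add: a_def b_def of_nat_diff field_simps power2_eq_square)
  then have "((1 - t)^2 - 7 * (1 - t) / real n + 12 / (real n)^2) / ((1 - s)^2 + (1 - s) / real n)
      = (a^2 - 7 * a + 12) / (b * (b + 1))"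
    using \<open>0 < n\<close> by simp
  also have "\<dots> \<le> a * (a - 1) / (b * (b + 1))"
    using \<open>2 \<le> a\<close> \<open>a + 1 \<le> b\<close> by (intro divide_right_mono) (auto simp: power2_eq_square algebra_simps)
  also have "\<dots> \<le> a * (a - 1) / (b * (b - 1))"
    using \<open>2 \<le> a\<close> \<open>a + 1 \<le> b\<close> by (intro divide_left_mono mult_mono) auto
  finally show ?thesis
    unfolding a_def b_def ordered_pairs_def .
qed

lemma exists_move_path_shrinking_to_fraction:
  fixes A :: "real^'n::finite^'n" and s t :: real
  assumes symm: "transpose A = A"
    and psd: "\<forall>z::real^'n. 0 \<le> z \<bullet> (A *v z)"
    and ones: "\<forall>j. (\<Sum>i\<in>UNIV. A $ i $ j) = 0"
    and S: "real (card S) = s * real CARD('n)"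
    and m: "real m = t * real CARD('n)"
    and "0 < t" "t < s"
  shows "\<exists>T. card T = m \<and> move_path A S T \<and>
           (t^2 - t / real CARD('n)) / (s^2 - s / real CARD('n)) * cut_value A S \<le> cut_value A T"
proof -
  have "0 < real m"
    unfolding m using \<open>0 < t\<close> by (intro mult_pos_pos) simp_all
  moreover have "real m \<le> real (card S)"
    unfolding m S using \<open>t < s\<close> by (intro mult_right_mono) simp_all
  ultimately have "1 \<le> m" "m \<le> card S"
    by simp_all
  from exists_move_path_shrinking_side[where side = "\<lambda>T. T",
      OF exists_single_move_shrinking[OF symm psd ones] cut_value_nonneg[OF psd] this]
  show ?thesis
    unfolding shrink_coefficient_eq[OF m S zero_less_card_finite] .
qed

lemma exists_move_path_growing_to_fraction:
  fixes A :: "real^'n::finite^'n" and s t :: real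
  assumes symm: "transpose A = A"
    and psd: "\<forall>z::real^'n. 0 \<le> z \<bullet> (A *v z)"
    and ones: "\<forall>j. (\<Sum>i\<in>UNIV. A $ i $ j) = 0"
    and S: "real (card S) = s * real CARD('n)"
    and m: "real m = t * real CARD('n)"
    and "0 < s" "s < t" "t \<le> 1/2"
  shows "\<exists>T. card T = m \<and> move_path A S T \<and>
           ((1 - t)^2 - 7 * (1 - t) / real CARD('n) + 12 / (real CARD('n))^2)
             / ((1 - s)^2 + (1 - s) / real CARD('n)) * cut_value A S
           \<le> cut_value A T"
proof -
  have "0 < real (card S)"
    unfolding S using \<open>0 < s\<close> by (intro mult_pos_pos) simp_all
  moreover have "real (card S) < real m"
    unfolding m S using \<open>s < t\<close> by (intro mult_strict_right_mono) simp_all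
  moreover have "real (2 * m) \<le> real CARD('n)"
    unfolding of_nat_mult m using \<open>t \<le> 1/2\<close> mult_right_mono[of "2 * t" 1 "real CARD('n)"] by simp
  ultimately have "0 < card S" "card S < m" "2 * m \<le> CARD('n)"
    by simp_all
  then have "1 \<le> CARD('n) - m" "CARD('n) - m \<le> card (- S)"
    by (simp_all add: card_Compl_eq)
  from exists_move_path_shrinking_side[where side = uminus,
      OF exists_single_move_growing[OF symm psd ones] cut_value_nonneg[OF psd] this]
  obtain T where T: "card (- T) = CARD('n) - m" "move_path A S T"
    "ordered_pairs (CARD('n) - m) / ordered_pairs (CARD('n) - card S) * cut_value A S \<le> cut_value A T"
    unfolding card_Compl_eq by blast
  have "card T \<le> CARD('n)"
    by (simp add: card_mono)
  with T(1) \<open>2 * m \<le> CARD('n)\<close> have "card T = m"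
    by (simp add: card_Compl_eq)
  moreover have "((1 - t)^2 - 7 * (1 - t) / real CARD('n) + 12 / (real CARD('n))^2)
      / ((1 - s)^2 + (1 - s) / real CARD('n)) * cut_value A S
    \<le> ordered_pairs (CARD('n) - m) / ordered_pairs (CARD('n) - card S) * cut_value A S"
    using grow_coefficient_le[OF m S \<open>0 < card S\<close> \<open>card S < m\<close> \<open>2 * m \<le> CARD('n)\<close>]
    by (rule mult_right_mono) (rule cut_value_nonneg[OF psd])
  ultimately show ?thesis
    using T(2,3) by (intro exI[of _ T]) (blast intro: order_trans)
qed


theorem lemma3p7:
  fixes A :: "real^'n^'n" and x :: "real^'n" and s t :: real
  assumes symm: "transpose A = A"
    and psd: "\<forall>z::real^'n. 0 \<le> z \<bullet> (A *v z)"
    and ones: "\<forall>j. (\<Sum>i\<in>UNIV. A $ i $ j) = 0"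
    and xpm: "\<forall>i. x $ i = 1 \<or> x $ i = -1"
    and S0_half: "real (card {i. x $ i = 1}) \<le> real CARD('n) / 2"
    and s_rng: "0 < s" "s \<le> 1/2"
    and t_rng: "0 < t" "t \<le> 1/2"
    and s_def: "real (card {i. x $ i = 1}) = s * real CARD('n)"
    and t_int: "t * real CARD('n) \<in> \<int>"
  shows "\<exists>T :: 'n set.
           real (card T) = t * real CARD('n) \<and>
           (t > s \<longrightarrow>
              cut_value A T \<ge>
                ((1 - t)^2 - 7 * (1 - t) / real CARD('n) + 12 / (real CARD('n))^2)
                / ((1 - s)^2 + (1 - s) / real CARD('n))
                * ((1/4) * (x \<bullet> (A *v x)))) \<and>
           (t < s \<longrightarrow>
              cut_value A T \<ge>
                (t^2 - t / real CARD('n)) / (s^2 - s / real CARD('n))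
                * ((1/4) * (x \<bullet> (A *v x)))) \<and>
           move_path A {i. x $ i = 1} T"
proof -
  define S0 where "S0 = {i. x $ i = 1}"
  have "x = sign_vec S0"
    using xpm by (auto simp: vec_eq_iff sign_vec_def S0_def)
  then have M0: "(1/4) * (x \<bullet> (A *v x)) = cut_value A S0"
    by (simp add: cut_value_def)
  have S0: "real (card S0) = s * real CARD('n)"
    using s_def by (simp add: S0_def)
  have "t * real CARD('n) \<in> \<nat>"
    using t_int t_rng by (simp add: Nats_altdef2)
  then obtain m where m: "real m = t * real CARD('n)"
    by (auto elim: Nats_cases)
  consider "t < s" | "t = s" | "s < t"
    by linarith
  then show ?thesis
  proof cases
    case 1
    with exists_move_path_shrinking_to_fraction[OF symm psd ones S0 m t_rng(1)] obtain T
      where "card T = m" "move_path A S0 T"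
        "(t^2 - t / real CARD('n)) / (s^2 - s / real CARD('n)) * cut_value A S0 \<le> cut_value A T"
      by blast
    with 1 show ?thesis
      unfolding M0 S0_def[symmetric] by (intro exI[of _ T]) (simp add: m)
  next
    case 2
    with m S0 have "card S0 = m"
      by simp
    with 2 show ?thesis
      unfolding S0_def[symmetric] by (intro exI[of _ S0]) (simp add: m move_path_refl)
  next
    case 3
    with exists_move_path_growing_to_fraction[OF symm psd ones S0 m s_rng(1) _ t_rng(2)] obtain T
      where "card T = m" "move_path A S0 T"
        "((1 - t)^2 - 7 * (1 - t) / real CARD('n) + 12 / (real CARD('n))^2)
           / ((1 - s)^2 + (1 - s) / real CARD('n)) * cut_value A S0 \<le> cut_value A T"
      by blast
    with 3 show ?thesis
      unfolding M0 S0_def[symmetric] by (intro exI[of _ T]) (simp add: m)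
  qed
qed

end
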